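(* Let $G$ be a connected finite simple graph with maximum degree $\Delta$. Then there exists an edge $e$ of $G$ with $|F(e)|=\Delta^2-1$ if and only if $G\in\mathcal{G}_\Delta$.
   Context: $N(w)$ is the open neighborhood of a vertex $w$. Two distinct edges $e,f$ are $1$-neighbors if they share an endvertex, and $2$-neighbors if they share no endvertex but some edge of $G$ shares an endvertex with each of them. $N(e)$ is the set of $1$-neighbors of $e$. For a $2$-neighbor $f=xy$ of $e=uv$, let $c(e,f)$ be the number of edges of $G$ joining a vertex of $\{u,v\}$ to a vertex of $\{x,y\}$. The $2$-neighbor $f$ is of Type 6 (relative to $e$) if $c(e,f)=1$; $T_6(e)$ is the set of such $f$. $F(e)=N(e)\cup(N^2(e)\setminus T_6(e))$, where $N^2(e)$ is the set of all $2$-neighbors of $e$; i.e. $F(e)$ consists of the $1$-neighbors of $e$ together with those $2$-neighbors $f$ of $e$ that are joined to $e$ by at least two edges. For a positive integer $p$, $\mathcal{G}_p$ is the family of $p$-regular graphs on $2p$ vertices containing an edge $uv$ with $N(u)\cup N(v)=V(G)$. *)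

theory Defs
  imports Main
begin

definition simple_graph :: "'a set \<Rightarrow> 'a set set \<Rightarrow> bool" where
  "simple_graph V E \<longleftrightarrow> finite V \<and> (\<forall>e\<in>E. e \<subseteq> V \<and> card e = 2)"

definition nbhd :: "'a set set \<Rightarrow> 'a \<Rightarrow> 'a set" where
  "nbhd E w = {u. {u, w} \<in> E}"

definition degree :: "'a set set \<Rightarrow> 'a \<Rightarrow> nat" where
  "degree E w = card (nbhd E w)"

definition max_degree :: "'a set \<Rightarrow> 'a set set \<Rightarrow> nat" where
  "max_degree V E = Max (degree E ` V)"

definition adj :: "'a set set \<Rightarrow> 'a \<Rightarrow> 'a \<Rightarrow> bool" where
  "adj E u v \<longleftrightarrow> {u, v} \<in> E"

definition connected_graph :: "'a set \<Rightarrow> 'a set set \<Rightarrow> bool" where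
  "connected_graph V E \<longleftrightarrow> V \<noteq> {} \<and> (\<forall>u\<in>V. \<forall>v\<in>V. (adj E)\<^sup>*\<^sup>* u v)"

definition edge_nbrs1 :: "'a set set \<Rightarrow> 'a set \<Rightarrow> 'a set set" where
  "edge_nbrs1 E e = {f\<in>E. f \<noteq> e \<and> f \<inter> e \<noteq> {}}"

definition edge_nbrs2 :: "'a set set \<Rightarrow> 'a set \<Rightarrow> 'a set set" where
  "edge_nbrs2 E e = {f\<in>E. f \<noteq> e \<and> f \<inter> e = {} \<and> (\<exists>g\<in>E. g \<inter> e \<noteq> {} \<and> g \<inter> f \<noteq> {})}"

definition conn_count :: "'a set set \<Rightarrow> 'a set \<Rightarrow> 'a set \<Rightarrow> nat" where
  "conn_count E e f = card {g\<in>E. \<exists>a\<in>e. \<exists>b\<in>f. g = {a, b}}"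

definition type6 :: "'a set set \<Rightarrow> 'a set \<Rightarrow> 'a set set" where
  "type6 E e = {f\<in>edge_nbrs2 E e. conn_count E e f = 1}"

definition Fset :: "'a set set \<Rightarrow> 'a set \<Rightarrow> 'a set set" where
  "Fset E e = edge_nbrs1 E e \<union> (edge_nbrs2 E e - type6 E e)"

definition family_G :: "nat \<Rightarrow> 'a set \<Rightarrow> 'a set set \<Rightarrow> bool" where
  "family_G p V E \<longleftrightarrow> p > 0 \<and> simple_graph V E \<and> (\<forall>w\<in>V. degree E w = p) \<and> card V = 2 * p
     \<and> (\<exists>u v. {u, v} \<in> E \<and> nbhd E u \<union> nbhd E v = V)"

end

theory Submission
  imports Defs
begin

text \<open>Fix an edge \<open>e = uv\<close> and let \<open>D\<close> be the maximum degree. A 2-neighbour \<open>f\<close> in \<open>F(e)\<close> is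
  joined to \<open>e\<close> by at least two edges \<open>g = ab\<close> (\<open>a \<in> e\<close>, \<open>b \<in> f\<close>), each a 1-neighbour of \<open>e\<close>;
  conversely, at most \<open>D - 1\<close> edges at \<open>b\<close> avoid \<open>e\<close>. Counting the pairs \<open>(g, f)\<close> both ways
  gives \<open>2 |F(e) \<inter> N\<^sup>2(e)| \<le> |N(e)| (D - 1)\<close>, and with \<open>|N(e)| \<le> 2 (D - 1)\<close> this yields
  \<open>|F(e)| \<le> D\<^sup>2 - 1\<close>. Equality makes every estimate sharp, which says precisely that \<open>N(u)\<close> and
  \<open>N(v)\<close> are disjoint and that their union is closed under adjacency and consists of vertices of
  degree \<open>D\<close>. In a connected graph that union is then all of \<open>V\<close>, so \<open>|V| = 2D\<close> and the graph is
  \<open>D\<close>-regular; conversely every edge witnessing membership in the family \<open>G\<^sub>D\<close> has these properties.\<close>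

definition incident_edges :: "'a set set \<Rightarrow> 'a \<Rightarrow> 'a set set" where
  "incident_edges E b = {f\<in>E. b \<in> f}"

lemma simple_graph_finite_edges:
  assumes "simple_graph V E" shows "finite E"
proof -
  have "E \<subseteq> Pow V" using assms by (auto simp: simple_graph_def)
  thus ?thesis using assms finite_subset by (auto simp: simple_graph_def)
qed

lemma simple_graph_edgeE:
  assumes "simple_graph V E" "f \<in> E"
  obtains x y where "f = {x,y}" "x \<noteq> y" "x \<in> V" "y \<in> V"
proof -
  have "card f = 2" "f \<subseteq> V" using assms by (auto simp: simple_graph_def)
  then obtain x y where "f = {x,y}" "x \<noteq> y" unfolding card_2_iff by blast
  thus ?thesis using that \<open>f \<subseteq> V\<close> by blast
qed

lemma simple_graph_edge_atE:
  assumes "simple_graph V E" "f \<in> E" "b \<in> f"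
  obtains z where "f = {b,z}" "z \<noteq> b"
proof -
  obtain x y where "f = {x,y}" "x \<noteq> y" using simple_graph_edgeE[OF assms(1,2)] .
  thus ?thesis using that assms(3) by (auto simp: insert_commute)
qed

lemma simple_graph_no_loop: "simple_graph V E \<Longrightarrow> {b,b} \<notin> E"
  by (auto simp: simple_graph_def)

lemma simple_graph_nbhd_subset: "simple_graph V E \<Longrightarrow> nbhd E w \<subseteq> V"
  by (auto simp: simple_graph_def nbhd_def)

lemma simple_graph_finite_nbhd: "simple_graph V E \<Longrightarrow> finite (nbhd E w)"
  using simple_graph_nbhd_subset finite_subset unfolding simple_graph_def by metis

lemma simple_graph_degree_pos:
  assumes "simple_graph V E" "{a,b} \<in> E" shows "0 < degree E b"
proof -
  have "a \<in> nbhd E b" using assms(2) by (simp add: nbhd_def)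
  thus ?thesis using simple_graph_finite_nbhd[OF assms(1)] by (auto simp: degree_def card_gt_0_iff)
qed

lemma incident_edges_eq_image:
  assumes "simple_graph V E" shows "incident_edges E b = (\<lambda>y. {y,b}) ` nbhd E b"
proof (intro equalityI subsetI)
  fix f assume "f \<in> incident_edges E b"
  hence "f \<in> E" "b \<in> f" by (auto simp: incident_edges_def)
  then obtain y where "f = {b,y}" using simple_graph_edge_atE[OF assms] by blast
  thus "f \<in> (\<lambda>y. {y,b}) ` nbhd E b" using \<open>f \<in> E\<close> by (auto simp: nbhd_def insert_commute)
qed (auto simp: incident_edges_def nbhd_def)

lemma card_incident_edges:
  assumes "simple_graph V E" shows "card (incident_edges E b) = degree E b"
proof -
  have "inj_on (\<lambda>y. {y,b}) (nbhd E b)"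
    using simple_graph_no_loop[OF assms]
    by (auto intro!: inj_onI simp: nbhd_def doubleton_eq_iff)
  thus ?thesis unfolding incident_edges_eq_image[OF assms] degree_def by (rule card_image)
qed

lemma degree_le_max_degree: "finite V \<Longrightarrow> w \<in> V \<Longrightarrow> degree E w \<le> max_degree V E"
  unfolding max_degree_def by (intro Max_ge) auto

lemma connected_graph_closed_subset:
  assumes "connected_graph V E" "u \<in> V" "u \<in> W" and closed: "\<And>x. x \<in> W \<Longrightarrow> nbhd E x \<subseteq> W"
  shows "V \<subseteq> W"
proof
  fix w assume "w \<in> V"
  hence "(adj E)\<^sup>*\<^sup>* u w" using assms(1,2) by (simp add: connected_graph_def)
  thus "w \<in> W"
  proof (induction rule: rtranclp_induct)
    case base show ?case using \<open>u \<in> W\<close> .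
  next
    case (step y z)
    hence "z \<in> nbhd E y" by (simp add: adj_def nbhd_def insert_commute)
    thus ?case using closed step.IH by blast
  qed
qed

section \<open>Tight edges\<close>

definition tight_edge :: "'a set set \<Rightarrow> nat \<Rightarrow> 'a \<Rightarrow> 'a \<Rightarrow> bool" where
  "tight_edge E D u v \<longleftrightarrow> nbhd E u \<inter> nbhd E v = {} \<and>
     (\<forall>b \<in> nbhd E u \<union> nbhd E v. degree E b = D \<and> nbhd E b \<subseteq> nbhd E u \<union> nbhd E v)"

lemma tight_edge_if_family_G:
  assumes G: "simple_graph V E" and "family_G D V E"
  shows "\<exists>u v. {u,v} \<in> E \<and> tight_edge E D u v"
proof -
  obtain u v where uv: "{u,v} \<in> E" and cover: "nbhd E u \<union> nbhd E v = V"
    and deg: "\<forall>w\<in>V. degree E w = D" and card_V: "card V = 2 * D"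
    using assms(2) by (auto simp: family_G_def)
  have "u \<in> V" "v \<in> V" using uv G by (auto simp: simple_graph_def)
  have "card (nbhd E u) + card (nbhd E v) = card V + card (nbhd E u \<inter> nbhd E v)"
    using card_Un_Int[OF simple_graph_finite_nbhd[OF G] simple_graph_finite_nbhd[OF G]] cover
    by simp
  hence "card (nbhd E u \<inter> nbhd E v) = 0"
    using deg card_V \<open>u \<in> V\<close> \<open>v \<in> V\<close> by (simp add: degree_def)
  hence "nbhd E u \<inter> nbhd E v = {}" using simple_graph_finite_nbhd[OF G] by simp
  moreover have "nbhd E b \<subseteq> V" for b using simple_graph_nbhd_subset[OF G] .
  ultimately have "tight_edge E D u v" using cover deg by (auto simp: tight_edge_def)
  thus ?thesis using uv by blast
qed

lemma family_G_if_tight_edge: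
  assumes G: "simple_graph V E" and conn: "connected_graph V E"
    and uv: "{u,v} \<in> E" and tight: "tight_edge E D u v"
  shows "family_G D V E"
proof -
  define W where "W = nbhd E u \<union> nbhd E v"
  have "u \<in> W" "v \<in> W" using uv by (auto simp: W_def nbhd_def insert_commute)
  have "u \<in> V" "v \<in> V" using uv G by (auto simp: simple_graph_def)
  have "V \<subseteq> W"
    using connected_graph_closed_subset[OF conn \<open>u \<in> V\<close> \<open>u \<in> W\<close>] tight
    by (simp add: W_def tight_edge_def)
  hence V_eq: "V = W" using simple_graph_nbhd_subset[OF G] by (auto simp: W_def)
  have deg: "\<forall>w\<in>V. degree E w = D" using tight V_eq by (auto simp: tight_edge_def W_def)
  hence "0 < D" using simple_graph_degree_pos[OF G uv] \<open>v \<in> V\<close> by simp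
  moreover have "card V = 2 * D"
    using V_eq deg \<open>u \<in> W\<close> \<open>v \<in> W\<close> tight simple_graph_finite_nbhd[OF G]
    by (simp add: W_def tight_edge_def card_Un_disjoint degree_def)
  ultimately show ?thesis using G deg uv V_eq by (auto simp: family_G_def W_def)
qed

section \<open>Double counting around an edge\<close>

lemma nat_double_count_eq_iff:
  fixes n f s t k :: nat
  assumes "n \<le> 2 * k" "2 * f \<le> s" "s \<le> t" "t \<le> n * k"
  shows "n + f = k * k + 2 * k \<longleftrightarrow> n = 2 * k \<and> 2 * f = s \<and> s = t \<and> t = n * k"
proof
  assume sum: "n + f = k * k + 2 * k"
  have "2 * k * (k + 2) = 2 * (n + f)" using sum by (simp add: algebra_simps)
  also have "\<dots> \<le> n * (k + 2)" using assms(2-4) by (simp add: algebra_simps)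
  finally have "2 * k \<le> n" using mult_le_cancel2[of "2 * k" "k + 2" n] by simp
  hence "n = 2 * k" using assms(1) by simp
  moreover from this have "2 * f = n * k" using sum by (simp add: algebra_simps)
  ultimately show "n = 2 * k \<and> 2 * f = s \<and> s = t \<and> t = n * k" using assms(2-4) by simp
next
  assume "n = 2 * k \<and> 2 * f = s \<and> s = t \<and> t = n * k"
  hence "n = 2 * k" "2 * f = 2 * (k * k)" by (simp_all add: algebra_simps)
  thus "n + f = k * k + 2 * k" by simp
qed

locale bounded_degree_edge =
  fixes V :: "'a set" and E :: "'a set set" and u v :: 'a and D :: nat
  assumes simple: "simple_graph V E" and edge: "{u,v} \<in> E"
    and degree_le: "\<And>w. w \<in> V \<Longrightarrow> degree E w \<le> D"
begin

text \<open>\<open>N1\<close> and \<open>F2\<close> are the 1- and 2-neighbours in \<open>F(uv)\<close>; \<open>card (links f)\<close> is \<open>c(uv, f)\<close>;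
  for \<open>g = ab \<in> N1\<close> with \<open>b \<notin> {u,v}\<close>, \<open>beyond g\<close> consists of the edges at \<open>b\<close> that avoid \<open>uv\<close>.\<close>

definition N1 :: "'a set set" where
  "N1 = edge_nbrs1 E {u,v}"

definition F2 :: "'a set set" where
  "F2 = edge_nbrs2 E {u,v} - type6 E {u,v}"

definition links :: "'a set \<Rightarrow> 'a set set" where
  "links f = {g\<in>E. \<exists>a\<in>{u,v}. \<exists>b\<in>f. g = {a,b}}"

definition beyond :: "'a set \<Rightarrow> 'a set set" where
  "beyond g = {f\<in>E. f \<inter> {u,v} = {} \<and> f \<inter> g \<noteq> {}}"

definition link_pairs :: "('a set \<times> 'a set) set" where
  "link_pairs = {(g,f). f \<in> F2 \<and> g \<in> links f}"

lemma u_neq_v: "u \<noteq> v"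
  using edge simple_graph_no_loop[OF simple] by auto

lemma vertex_of_edge_in_V: "f \<in> E \<Longrightarrow> x \<in> f \<Longrightarrow> x \<in> V"
  using simple by (auto simp: simple_graph_def)

lemma u_in_V: "u \<in> V" and v_in_V: "v \<in> V"
  using vertex_of_edge_in_V[OF edge] by auto

lemma finite_E: "finite E"
  using simple_graph_finite_edges[OF simple] .

lemma finite_N1: "finite N1" and finite_F2: "finite F2" and finite_links: "finite (links f)"
  and finite_beyond: "finite (beyond g)"
  using finite_E by (simp_all add: N1_def F2_def links_def beyond_def edge_nbrs1_def edge_nbrs2_def)

lemma one_le_D: "1 \<le> D"
  using simple_graph_degree_pos[OF simple edge] degree_le[OF v_in_V] by simp

lemma card_Fset: "card (Fset E {u,v}) = card N1 + card F2"
proof -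
  have "N1 \<inter> F2 = {}" by (auto simp: N1_def F2_def edge_nbrs1_def edge_nbrs2_def)
  thus ?thesis using finite_N1 finite_F2 by (simp add: Fset_def N1_def F2_def card_Un_disjoint)
qed

lemma card_N1: "card N1 + 2 = degree E u + degree E v"
proof -
  define I where "I = incident_edges E"
  have fin: "finite (I w)" for w using finite_E by (simp add: I_def incident_edges_def)
  have "I u \<inter> I v \<subseteq> {{u,v}}"
  proof
    fix f assume "f \<in> I u \<inter> I v"
    hence "f \<in> E" "u \<in> f" "v \<in> f" by (auto simp: I_def incident_edges_def)
    then obtain x y where "f = {x,y}" using simple_graph_edgeE[OF simple] by blast
    thus "f \<in> {{u,v}}" using \<open>u \<in> f\<close> \<open>v \<in> f\<close> u_neq_v by auto
  qed
  moreover have uv_in: "{u,v} \<in> I u \<inter> I v" using edge by (simp add: I_def incident_edges_def)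
  ultimately have "I u \<inter> I v = {{u,v}}" by blast
  hence "card (I u \<union> I v) + 1 = degree E u + degree E v"
    using card_Un_Int[OF fin fin] card_incident_edges[OF simple] by (simp add: I_def)
  moreover have "N1 = (I u \<union> I v) - {{u,v}}"
    by (auto simp: N1_def edge_nbrs1_def I_def incident_edges_def)
  moreover have "card (I u \<union> I v) \<noteq> 0" using uv_in fin by auto
  ultimately show ?thesis using uv_in by simp
qed

lemma N1E:
  assumes "g \<in> N1"
  obtains a b where "g = {a,b}" "g \<in> E" "a \<in> {u,v}" "b \<notin> {u,v}"
proof -
  have g: "g \<in> E" "g \<noteq> {u,v}" "g \<inter> {u,v} \<noteq> {}" using assms by (auto simp: N1_def edge_nbrs1_def)
  then obtain x y where xy: "g = {x,y}" "x \<noteq> y" using simple_graph_edgeE[OF simple] by blast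
  show ?thesis
  proof (cases "x \<in> {u,v}")
    case True
    hence "y \<notin> {u,v}" using xy g u_neq_v by auto
    thus ?thesis using that True xy g by blast
  next
    case False
    hence "y \<in> {u,v}" using xy g by auto
    moreover have "g = {y,x}" using xy by auto
    ultimately show ?thesis using that False g by blast
  qed
qed

lemma N1I: "{a,b} \<in> E \<Longrightarrow> a \<in> {u,v} \<Longrightarrow> b \<notin> {u,v} \<Longrightarrow> {a,b} \<in> N1"
  by (auto simp: N1_def edge_nbrs1_def)

lemma links_nonempty_iff:
  assumes "f \<inter> {u,v} = {}"
  shows "links f \<noteq> {} \<longleftrightarrow> (\<exists>g\<in>E. g \<inter> {u,v} \<noteq> {} \<and> g \<inter> f \<noteq> {})"
proof
  assume "\<exists>g\<in>E. g \<inter> {u,v} \<noteq> {} \<and> g \<inter> f \<noteq> {}"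
  then obtain g a b where g: "g \<in> E" "a \<in> g" "a \<in> {u,v}" "b \<in> g" "b \<in> f" by blast
  moreover obtain x y where "g = {x,y}" using simple_graph_edgeE[OF simple \<open>g \<in> E\<close>] .
  moreover have "a \<noteq> b" using g assms by auto
  ultimately have "g \<in> links f" by (auto simp: links_def)
  thus "links f \<noteq> {}" by blast
qed (auto simp: links_def)

lemma F2_iff: "f \<in> F2 \<longleftrightarrow> f \<in> E \<and> f \<inter> {u,v} = {} \<and> 2 \<le> card (links f)"
proof -
  have "conn_count E {u,v} f = card (links f)" by (simp add: conn_count_def links_def)
  hence "f \<in> F2 \<longleftrightarrow> f \<in> E \<and> f \<inter> {u,v} = {} \<and> links f \<noteq> {} \<and> card (links f) \<noteq> 1"
    using links_nonempty_iff by (auto simp: F2_def type6_def edge_nbrs2_def)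
  moreover have "links f \<noteq> {} \<longleftrightarrow> card (links f) \<noteq> 0" using finite_links by simp
  ultimately show ?thesis by auto
qed
lemma beyond_subset: "a \<in> {u,v} \<Longrightarrow> b \<notin> {u,v} \<Longrightarrow> beyond {a,b} \<subseteq> incident_edges E b - {{a,b}}"
  by (auto simp: beyond_def incident_edges_def)

lemma card_incident_edges_remove:
  "{a,b} \<in> E \<Longrightarrow> card (incident_edges E b - {{a,b}}) = degree E b - 1"
  using card_incident_edges[OF simple] by (simp add: incident_edges_def)

lemma card_beyond_le: "g \<in> N1 \<Longrightarrow> card (beyond g) \<le> D - 1"
proof (elim N1E)
  fix a b assume ab: "g = {a,b}" "g \<in> E" "a \<in> {u,v}" "b \<notin> {u,v}"
  have "card (beyond g) \<le> card (incident_edges E b - {g})"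
    using beyond_subset[OF ab(3,4)] ab(1) finite_E by (intro card_mono) (auto simp: incident_edges_def)
  also have "\<dots> = degree E b - 1" using card_incident_edges_remove ab(1,2) by simp
  also have "\<dots> \<le> D - 1" using degree_le[of b] vertex_of_edge_in_V[OF ab(2), of b] ab(1)
    by (simp add: diff_le_mono)
  finally show ?thesis .
qed

lemma link_pairs_subset: "link_pairs \<subseteq> Sigma N1 beyond"
proof clarify
  fix g f assume "(g,f) \<in> link_pairs"
  hence "f \<in> E" "f \<inter> {u,v} = {}" "g \<in> links f" by (auto simp: link_pairs_def F2_iff)
  thus "g \<in> N1 \<and> f \<in> beyond g" by (auto simp: links_def N1_def edge_nbrs1_def beyond_def)
qed

lemma card_link_pairs: "card link_pairs = (\<Sum>f\<in>F2. card (links f))"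
proof -
  have "link_pairs = (\<lambda>(f,g). (g,f)) ` Sigma F2 links" by (auto simp: link_pairs_def)
  moreover have "inj_on (\<lambda>(f,g). (g,f)) (Sigma F2 links)" by (auto simp: inj_on_def)
  ultimately show ?thesis using finite_F2 finite_links by (simp add: card_image)
qed

lemma two_card_F2_le: "2 * card F2 \<le> card link_pairs"
  using sum_mono[of F2 "\<lambda>_. 2" "\<lambda>f. card (links f)"] by (simp add: card_link_pairs F2_iff)

lemma card_link_pairs_le: "card link_pairs \<le> card (Sigma N1 beyond)"
  using link_pairs_subset finite_N1 finite_beyond by (intro card_mono) auto

lemma card_Sigma_beyond_le: "card (Sigma N1 beyond) \<le> card N1 * (D - 1)"
  using sum_mono[of N1 "\<lambda>g. card (beyond g)" "\<lambda>_. D - 1"] card_beyond_le finite_N1 finite_beyond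
  by simp

lemma card_N1_le: "card N1 \<le> 2 * (D - 1)"
  using card_N1 degree_le[OF u_in_V] degree_le[OF v_in_V] by simp

lemma card_Fset_eq_iff:
  "card (Fset E {u,v}) = D\<^sup>2 - 1 \<longleftrightarrow>
     card N1 = 2 * (D - 1) \<and> 2 * card F2 = card link_pairs \<and> link_pairs = Sigma N1 beyond \<and>
     (\<forall>g\<in>N1. card (beyond g) = D - 1)"
proof -
  have "D\<^sup>2 - 1 = (D - 1) * (D - 1) + 2 * (D - 1)"
    using one_le_D by (cases D) (auto simp: power2_eq_square)
  moreover have "card link_pairs = card (Sigma N1 beyond) \<longleftrightarrow> link_pairs = Sigma N1 beyond"
    using card_subset_eq[OF _ link_pairs_subset] finite_N1 finite_beyond by auto
  moreover have "card (Sigma N1 beyond) = card N1 * (D - 1) \<longleftrightarrow> (\<forall>g\<in>N1. card (beyond g) = D - 1)"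
  proof -
    have "card (Sigma N1 beyond) = (\<Sum>g\<in>N1. card (beyond g))" using finite_N1 finite_beyond by simp
    thus ?thesis using sum_mono_inv[of "\<lambda>g. card (beyond g)" N1 "\<lambda>_. D - 1"] card_beyond_le finite_N1
      by auto
  qed
  ultimately show ?thesis
    using nat_double_count_eq_iff[OF card_N1_le two_card_F2_le card_link_pairs_le card_Sigma_beyond_le]
    by (simp add: card_Fset)
qed

lemma endpoints_in_nbhds: "u \<in> nbhd E v" "v \<in> nbhd E u"
  using edge by (auto simp: nbhd_def insert_commute)

lemma other_endpoint:
  assumes "a \<in> {u,v}" obtains a' where "{u,v} = {a,a'}" "a' \<noteq> a"
  using assms u_neq_v that by auto

lemma common_nbr_iff:
  assumes "{a,b} \<in> E" "{u,v} = {a,a'}"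
  shows "b \<in> nbhd E u \<inter> nbhd E v \<longleftrightarrow> {a',b} \<in> E"
proof -
  have "b \<in> nbhd E u \<inter> nbhd E v \<longleftrightarrow> {a,b} \<in> E \<and> {a',b} \<in> E"
    using assms(2) by (auto simp: nbhd_def insert_commute doubleton_eq_iff)
  thus ?thesis using assms(1) by blast
qed

lemma beyond_memE:
  assumes "f \<in> beyond {a,b}" "a \<in> {u,v}"
  obtains z where "f = {b,z}" "f \<in> E" "b \<notin> {u,v}" "z \<notin> {u,v}" "z \<noteq> b"
proof -
  have f: "f \<in> E" "f \<inter> {u,v} = {}" "f \<inter> {a,b} \<noteq> {}" using assms(1) by (auto simp: beyond_def)
  hence "b \<in> f" using assms(2) by auto
  then obtain z where "f = {b,z}" "z \<noteq> b" using simple_graph_edge_atE[OF simple f(1)] by blast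
  thus ?thesis using that f by auto
qed

lemma beyond_eq_iff:
  assumes ab: "{a,b} \<in> E" "a \<in> {u,v}" "b \<notin> {u,v}"
  shows "beyond {a,b} = incident_edges E b - {{a,b}} \<longleftrightarrow> b \<notin> nbhd E u \<inter> nbhd E v"
proof -
  obtain a' where a': "{u,v} = {a,a'}" "a' \<noteq> a" using other_endpoint[OF ab(2)] .
  have "{a',b} \<in> incident_edges E b - {{a,b}} - beyond {a,b}" if "{a',b} \<in> E"
    using that a' by (auto simp: incident_edges_def beyond_def doubleton_eq_iff)
  moreover have "incident_edges E b - {{a,b}} \<subseteq> beyond {a,b}" if "{a',b} \<notin> E"
  proof
    fix f assume f: "f \<in> incident_edges E b - {{a,b}}"
    hence "f \<in> E" "b \<in> f" "f \<noteq> {a,b}" by (auto simp: incident_edges_def)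
    then obtain z where "f = {b,z}" using simple_graph_edge_atE[OF simple] by blast
    hence "z \<notin> {u,v}" using a' \<open>f \<in> E\<close> \<open>f \<noteq> {a,b}\<close> that by (auto simp: insert_commute)
    thus "f \<in> beyond {a,b}" using \<open>f = {b,z}\<close> \<open>f \<in> E\<close> ab(3) by (auto simp: beyond_def)
  qed
  ultimately show ?thesis using common_nbr_iff[OF ab(1) a'(1)] beyond_subset[OF ab(2,3)] by blast
qed

lemma beyond_mem_F2_iff:
  assumes ab: "{a,b} \<in> E" "a \<in> {u,v}" and not_common: "b \<notin> nbhd E u \<inter> nbhd E v"
    and f: "{b,z} \<in> beyond {a,b}"
  shows "{b,z} \<in> F2 \<longleftrightarrow> z \<in> nbhd E u \<union> nbhd E v"
proof -
  have bz: "{b,z} \<in> E" "b \<notin> {u,v}" "z \<notin> {u,v}" using f ab(2) by (auto simp: beyond_def)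
  have "z \<noteq> b" using bz(1) simple_graph_no_loop[OF simple] by auto
  obtain a' where a': "{u,v} = {a,a'}" "a' \<noteq> a" using other_endpoint[OF ab(2)] .
  have ab_link: "{a,b} \<in> links {b,z}" using ab by (auto simp: links_def)
  have "{b,z} \<in> F2 \<longleftrightarrow> 2 \<le> card (links {b,z})" using bz by (simp add: F2_iff)
  also have "\<dots> \<longleftrightarrow> (\<exists>g\<in>links {b,z}. g \<noteq> {a,b})"
  proof
    assume two: "2 \<le> card (links {b,z})"
    show "\<exists>g\<in>links {b,z}. g \<noteq> {a,b}"
    proof (rule ccontr)
      assume "\<not> (\<exists>g\<in>links {b,z}. g \<noteq> {a,b})"
      hence "card (links {b,z}) \<le> card {{a,b}}" by (intro card_mono) auto
      thus False using two by simp
    qed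
  next
    assume "\<exists>g\<in>links {b,z}. g \<noteq> {a,b}"
    then obtain g where g: "g \<in> links {b,z}" "g \<noteq> {a,b}" by blast
    have "card {g, {a,b}} \<le> card (links {b,z})" using g(1) ab_link by (intro card_mono finite_links) auto
    thus "2 \<le> card (links {b,z})" using g(2) by simp
  qed
  also have "\<dots> \<longleftrightarrow> z \<in> nbhd E u \<union> nbhd E v"
  proof
    assume "\<exists>g\<in>links {b,z}. g \<noteq> {a,b}"
    then obtain g a'' c where g: "g \<in> E" "a'' \<in> {a,a'}" "c \<in> {b,z}" "g = {a'',c}" "g \<noteq> {a,b}"
      using a'(1) by (auto simp: links_def)
    have "c \<noteq> b"
    proof
      assume "c = b"
      hence "{a',b} \<in> E" using g by auto
      thus False using not_common common_nbr_iff[OF ab(1) a'(1)] by blast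
    qed
    hence "{a'',z} \<in> E" "a'' \<in> {u,v}" using g a'(1) by auto
    thus "z \<in> nbhd E u \<union> nbhd E v" by (auto simp: nbhd_def insert_commute)
  next
    assume "z \<in> nbhd E u \<union> nbhd E v"
    then obtain a'' where "a'' \<in> {u,v}" "{a'',z} \<in> E" by (auto simp: nbhd_def insert_commute)
    moreover have "{a'',z} \<noteq> {a,b}"
      using bz \<open>z \<noteq> b\<close> ab(2) \<open>a'' \<in> {u,v}\<close> by (auto simp: doubleton_eq_iff)
    ultimately show "\<exists>g\<in>links {b,z}. g \<noteq> {a,b}" by (auto simp: links_def)
  qed
  finally show ?thesis .
qed

lemma card_links_le_two:
  assumes disj: "nbhd E u \<inter> nbhd E v = {}" and f: "f \<in> E"
  shows "card (links f) \<le> 2"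
proof -
  obtain x y where xy: "f = {x,y}" using simple_graph_edgeE[OF simple f] .
  define L where "L w = {g\<in>E. \<exists>a\<in>{u,v}. g = {a,w}}" for w
  have card_L: "card (L w) \<le> 1" for w
  proof -
    have "L w \<subseteq> {{u,w}} \<or> L w \<subseteq> {{v,w}}"
    proof (rule ccontr)
      assume "\<not> ?thesis"
      hence "{u,w} \<in> E" "{v,w} \<in> E" by (auto simp: L_def)
      hence "w \<in> nbhd E u \<inter> nbhd E v" by (simp add: nbhd_def insert_commute)
      thus False using disj by blast
    qed
    moreover have "card (L w) \<le> 1" if "L w \<subseteq> {g}" for g
      using card_mono[OF _ that] by simp
    ultimately show ?thesis by blast
  qed
  have "links f = L x \<union> L y" using xy by (auto simp: links_def L_def)
  hence "card (links f) \<le> card (L x) + card (L y)" using card_Un_le by simp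
  thus ?thesis using card_L[of x] card_L[of y] by linarith
qed

lemma tight_edge_if_count_equality:
  assumes card_N1_eq: "card N1 = 2 * (D - 1)" and pairs_eq: "link_pairs = Sigma N1 beyond"
    and card_beyond_eq: "\<forall>g\<in>N1. card (beyond g) = D - 1"
  shows "tight_edge E D u v"
proof -
  have deg_u: "degree E u = D" and deg_v: "degree E v = D"
    using card_N1 card_N1_eq degree_le[OF u_in_V] degree_le[OF v_in_V] one_le_D by linarith+
  have outer: "degree E b = D \<and> b \<notin> nbhd E u \<inter> nbhd E v"
    if ab: "{a,b} \<in> E" "a \<in> {u,v}" "b \<notin> {u,v}" for a b
  proof -
    have sub: "beyond {a,b} \<subseteq> incident_edges E b - {{a,b}}" using beyond_subset[OF ab(2,3)] .
    have fin: "finite (incident_edges E b - {{a,b}})" using finite_E by (simp add: incident_edges_def)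
    have "D - 1 \<le> degree E b - 1"
      using card_mono[OF fin sub] card_beyond_eq N1I[OF ab] card_incident_edges_remove[OF ab(1)] by simp
    moreover have "degree E b \<le> D" using degree_le vertex_of_edge_in_V[OF ab(1)] by simp
    ultimately have "degree E b = D" using simple_graph_degree_pos[OF simple ab(1)] by linarith
    hence "card (beyond {a,b}) = card (incident_edges E b - {{a,b}})"
      using card_beyond_eq N1I[OF ab] card_incident_edges_remove[OF ab(1)] by simp
    hence "beyond {a,b} = incident_edges E b - {{a,b}}" using card_subset_eq[OF fin sub] by simp
    thus ?thesis using beyond_eq_iff[OF ab] \<open>degree E b = D\<close> by blast
  qed
  have disj: "nbhd E u \<inter> nbhd E v = {}"
  proof (rule equals0I)
    fix b assume b: "b \<in> nbhd E u \<inter> nbhd E v"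
    hence "{u,b} \<in> E" "b \<notin> {u,v}"
      using simple_graph_no_loop[OF simple] by (auto simp: nbhd_def insert_commute)
    thus False using outer[of u b] b by blast
  qed
  have closed: "nbhd E b \<subseteq> nbhd E u \<union> nbhd E v"
    if ab: "{a,b} \<in> E" "a \<in> {u,v}" "b \<notin> {u,v}" for a b
  proof
    fix y assume y: "y \<in> nbhd E b"
    show "y \<in> nbhd E u \<union> nbhd E v"
    proof (cases "y \<in> {u,v}")
      case True thus ?thesis using endpoints_in_nbhds by auto
    next
      case False
      hence "{b,y} \<in> beyond {a,b}" using y ab(3) by (auto simp: beyond_def nbhd_def insert_commute)
      hence "{b,y} \<in> F2" using pairs_eq N1I[OF ab] by (auto simp: link_pairs_def)
      thus ?thesis using beyond_mem_F2_iff[OF ab(1,2)] outer[OF ab] \<open>{b,y} \<in> beyond {a,b}\<close> by blast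
    qed
  qed
  have "degree E b = D \<and> nbhd E b \<subseteq> nbhd E u \<union> nbhd E v"
    if b: "b \<in> nbhd E u \<union> nbhd E v" for b
  proof (cases "b \<in> {u,v}")
    case True thus ?thesis using deg_u deg_v by auto
  next
    case False
    obtain a where "{a,b} \<in> E" "a \<in> {u,v}" using b by (auto simp: nbhd_def insert_commute)
    thus ?thesis using outer closed False by blast
  qed
  thus ?thesis using disj by (simp add: tight_edge_def)
qed

lemma count_equality_if_tight_edge:
  assumes "tight_edge E D u v"
  shows "card N1 = 2 * (D - 1) \<and> 2 * card F2 = card link_pairs \<and> link_pairs = Sigma N1 beyond \<and>
    (\<forall>g\<in>N1. card (beyond g) = D - 1)"
proof -
  have disj: "nbhd E u \<inter> nbhd E v = {}"
    and tight: "\<And>b. b \<in> nbhd E u \<union> nbhd E v \<Longrightarrow>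
                  degree E b = D \<and> nbhd E b \<subseteq> nbhd E u \<union> nbhd E v"
    using assms by (auto simp: tight_edge_def)
  have "degree E u = D" "degree E v = D" using tight endpoints_in_nbhds by blast+
  hence "card N1 = 2 * (D - 1)" using card_N1 by simp
  moreover have outer: "beyond g = incident_edges E b - {g} \<and> b \<in> nbhd E u \<union> nbhd E v"
    if ab: "g = {a,b}" "g \<in> E" "a \<in> {u,v}" "b \<notin> {u,v}" for g a b
  proof
    show "beyond g = incident_edges E b - {g}" using beyond_eq_iff[of a b] ab disj by blast
    show "b \<in> nbhd E u \<union> nbhd E v" using ab by (auto simp: nbhd_def insert_commute)
  qed
  have "card (beyond g) = D - 1" if "g \<in> N1" for g
    using that
  proof (elim N1E)
    fix a b assume ab: "g = {a,b}" "g \<in> E" "a \<in> {u,v}" "b \<notin> {u,v}"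
    thus ?thesis using outer[OF ab] card_incident_edges_remove tight by auto
  qed
  moreover have "Sigma N1 beyond \<subseteq> link_pairs"
  proof clarify
    fix g f assume "g \<in> N1" "f \<in> beyond g"
    then obtain a b where ab: "g = {a,b}" "g \<in> E" "a \<in> {u,v}" "b \<notin> {u,v}" by (elim N1E)
    have f_beyond: "f \<in> beyond {a,b}" using ab(1) \<open>f \<in> beyond g\<close> by simp
    then obtain z where f: "f = {b,z}" "f \<in> E" using beyond_memE[OF _ ab(3)] by blast
    have "z \<in> nbhd E b" using f by (simp add: nbhd_def insert_commute)
    moreover have "b \<in> nbhd E u \<union> nbhd E v" using outer[OF ab] by simp
    ultimately have "z \<in> nbhd E u \<union> nbhd E v" using tight by blast
    hence "f \<in> F2" using beyond_mem_F2_iff[of a b z] ab f(1) f_beyond disj by simp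
    moreover have "g \<in> links f" using ab f by (auto simp: links_def)
    ultimately show "(g,f) \<in> link_pairs" by (simp add: link_pairs_def)
  qed
  moreover have "card (links f) = 2" if "f \<in> F2" for f
    using that card_links_le_two[OF disj] by (simp add: F2_iff le_antisym)
  hence "2 * card F2 = card link_pairs" by (simp add: card_link_pairs)
  ultimately show ?thesis using link_pairs_subset by blast
qed

lemma card_Fset_eq_iff_tight_edge: "card (Fset E {u,v}) = D\<^sup>2 - 1 \<longleftrightarrow> tight_edge E D u v"
  using card_Fset_eq_iff tight_edge_if_count_equality count_equality_if_tight_edge by blast

end

theorem lemma3:
  fixes V :: "'a set" and E :: "'a set set"
  assumes "simple_graph V E" and "connected_graph V E"
  shows "(\<exists>e\<in>E. int (card (Fset E e)) = int (max_degree V E) ^ 2 - 1)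
         \<longleftrightarrow> family_G (max_degree V E) V E"
proof -
  let ?D = "max_degree V E"
  have tight_iff: "int (card (Fset E {u,v})) = int ?D ^ 2 - 1 \<longleftrightarrow> tight_edge E ?D u v"
    if "{u,v} \<in> E" for u v
  proof -
    interpret bounded_degree_edge V E u v ?D
      using assms(1) that degree_le_max_degree by unfold_locales (auto simp: simple_graph_def)
    have "int ?D ^ 2 - 1 = int (?D\<^sup>2 - 1)" using one_le_D by (simp add: of_nat_diff)
    thus ?thesis using card_Fset_eq_iff_tight_edge by simp
  qed
  have "(\<exists>e\<in>E. int (card (Fset E e)) = int ?D ^ 2 - 1) \<longleftrightarrow>
        (\<exists>u v. {u,v} \<in> E \<and> int (card (Fset E {u,v})) = int ?D ^ 2 - 1)"
    using simple_graph_edgeE[OF assms(1)] by metis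
  also have "\<dots> \<longleftrightarrow> (\<exists>u v. {u,v} \<in> E \<and> tight_edge E ?D u v)" using tight_iff by blast
  also have "\<dots> \<longleftrightarrow> family_G ?D V E"
    using tight_edge_if_family_G[OF assms(1)] family_G_if_tight_edge[OF assms] by blast
  finally show ?thesis .
qed

end
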